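(* Let $v\in L_2(-\infty,+\infty)$, $\alpha\in\mathbb{R}$, and let $A(v,\alpha)$ be the self-adjoint operator in $L_2$ acting by $A(v,\alpha)\psi(x)=i\psi'(x)+v(x)\big[\tfrac12\psi(-0)+\tfrac{e^{-i\alpha}}{2}\psi(+0)\big]$, $x\ne0$, on the domain of all $\psi\in W_2^1(\Omega)$ with $i\psi(-0)-ie^{-i\alpha}\psi(+0)=\langle\psi,v\rangle$. Then a real number $\lambda$ is an eigenvalue of $A(v,\alpha)$ if and only if the function $$\psi_\lambda(x)=\theta(x)\Big(-i\int_x^\infty e^{-i\lambda(x-y)}v(y)\,dy\Big)+\theta(-x)\Big(i\int_{-\infty}^x e^{-i\lambda(x-y)}v(y)\,dy\Big)$$ belongs to $L_2(\mathbb{R})$ and satisfies $$\psi_\lambda(-0)+e^{-i\alpha}\psi_\lambda(+0)=2,\qquad \psi_\lambda(-0)-e^{-i\alpha}\psi_\lambda(+0)=-i\langle\psi_\lambda,v\rangle.$$ If these conditions hold, then $A(v,\alpha)\psi_\lambda=\lambda\psi_\lambda$. Every eigenvalue has multiplicity one.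
   Context: $\Omega=\mathbb{R}\setminus\{0\}$; $W_2^1(\Omega)$ consists of functions whose restrictions to each half-line belong to $W_2^1$ of that half-line; $\psi(\pm0)$ are one-sided limits at $0$; $\theta$ is the Heaviside function; $\langle f,g\rangle=\int f\bar g\,dx$. *)

theory Defs
  imports "HOL-Analysis.Analysis"
begin

definition sq_int :: "(real \<Rightarrow> complex) \<Rightarrow> bool" where
  "sq_int f \<longleftrightarrow> f \<in> borel_measurable lebesgue \<and>
     integrable lebesgue (\<lambda>x. (cmod (f x))\<^sup>2)"

definition l2_inner :: "(real \<Rightarrow> complex) \<Rightarrow> (real \<Rightarrow> complex) \<Rightarrow> complex" where
  "l2_inner f g = (LINT x|lebesgue. f x * cnj (g x))"

definition lim_m0 :: "(real \<Rightarrow> complex) \<Rightarrow> complex" where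
  "lim_m0 f = Lim (at_left 0) f"

definition lim_p0 :: "(real \<Rightarrow> complex) \<Rightarrow> complex" where
  "lim_p0 f = Lim (at_right 0) f"

text \<open>psi belongs to W_2^1(Omega) with derivative dpsi (on each half-line psi is
  the absolutely continuous representative, psi and dpsi are square integrable).\<close>
definition W21_Omega :: "(real \<Rightarrow> complex) \<Rightarrow> (real \<Rightarrow> complex) \<Rightarrow> bool" where
  "W21_Omega psi dpsi \<longleftrightarrow> sq_int psi \<and> sq_int dpsi \<and>
     (\<forall>x y. 0 < x \<longrightarrow> x \<le> y \<longrightarrow> psi y - psi x = (LINT t:{x..y}|lebesgue. dpsi t)) \<and>
     (\<forall>x y. x \<le> y \<longrightarrow> y < 0 \<longrightarrow> psi y - psi x = (LINT t:{x..y}|lebesgue. dpsi t))"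

definition in_dom :: "(real \<Rightarrow> complex) \<Rightarrow> real \<Rightarrow> (real \<Rightarrow> complex) \<Rightarrow> (real \<Rightarrow> complex) \<Rightarrow> bool" where
  "in_dom v \<alpha> psi dpsi \<longleftrightarrow> W21_Omega psi dpsi \<and>
     \<i> * lim_m0 psi - \<i> * exp (- \<i> * of_real \<alpha>) * lim_p0 psi = l2_inner psi v"

definition A_op :: "(real \<Rightarrow> complex) \<Rightarrow> real \<Rightarrow> (real \<Rightarrow> complex) \<Rightarrow> (real \<Rightarrow> complex) \<Rightarrow> real \<Rightarrow> complex" where
  "A_op v \<alpha> psi dpsi x = \<i> * dpsi x +
     v x * (lim_m0 psi / 2 + exp (- \<i> * of_real \<alpha>) / 2 * lim_p0 psi)"

definition eigenpair :: "(real \<Rightarrow> complex) \<Rightarrow> real \<Rightarrow> real \<Rightarrow> (real \<Rightarrow> complex) \<Rightarrow> (real \<Rightarrow> complex) \<Rightarrow> bool" where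
  "eigenpair v \<alpha> lam psi dpsi \<longleftrightarrow> in_dom v \<alpha> psi dpsi \<and>
     (AE x in lebesgue. A_op v \<alpha> psi dpsi x = of_real lam * psi x)"

definition is_eigenvalue :: "(real \<Rightarrow> complex) \<Rightarrow> real \<Rightarrow> real \<Rightarrow> bool" where
  "is_eigenvalue v \<alpha> lam \<longleftrightarrow>
     (\<exists>psi dpsi. eigenpair v \<alpha> lam psi dpsi \<and> \<not> (AE x in lebesgue. psi x = 0))"

definition kern :: "(real \<Rightarrow> complex) \<Rightarrow> real \<Rightarrow> real \<Rightarrow> real \<Rightarrow> complex" where
  "kern v lam x y = exp (- \<i> * of_real lam * of_real (x - y)) * v y"

definition psi_lam_exists :: "(real \<Rightarrow> complex) \<Rightarrow> real \<Rightarrow> bool" where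
  "psi_lam_exists v lam \<longleftrightarrow>
     (\<forall>x>0. \<exists>l. ((\<lambda>R. LINT y:{x..R}|lebesgue. kern v lam x y) \<longlongrightarrow> l) at_top) \<and>
     (\<forall>x<0. \<exists>l. ((\<lambda>R. LINT y:{R..x}|lebesgue. kern v lam x y) \<longlongrightarrow> l) at_bot)"

definition psi_lam :: "(real \<Rightarrow> complex) \<Rightarrow> real \<Rightarrow> real \<Rightarrow> complex" where
  "psi_lam v lam x =
     (if x > 0 then - \<i> * Lim at_top (\<lambda>R. LINT y:{x..R}|lebesgue. kern v lam x y)
      else if x < 0 then \<i> * Lim at_bot (\<lambda>R. LINT y:{R..x}|lebesgue. kern v lam x y)
      else 0)"

definition psi_cond :: "(real \<Rightarrow> complex) \<Rightarrow> real \<Rightarrow> real \<Rightarrow> bool" where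
  "psi_cond v \<alpha> lam \<longleftrightarrow> psi_lam_exists v lam \<and> sq_int (psi_lam v lam) \<and>
     lim_m0 (psi_lam v lam) + exp (- \<i> * of_real \<alpha>) * lim_p0 (psi_lam v lam) = 2 \<and>
     lim_m0 (psi_lam v lam) - exp (- \<i> * of_real \<alpha>) * lim_p0 (psi_lam v lam)
       = - \<i> * l2_inner (psi_lam v lam) v"

end

theory Submission
  imports Defs
begin

(* On each half-line an eigenfunction psi satisfies psi' = -i lam psi + i c v, where
   c = (psi(-0) + e^{-i alpha} psi(+0)) / 2 is the coefficient of v in A(v,alpha).
   Multiplying by e^{i lam x} and using that W_2^1 functions vanish at infinity, the equation
   integrates to psi = c psi_lam off 0.  Hence c <> 0 for a nontrivial eigenfunction, all
   eigenfunctions are multiples of psi_lam, and the domain condition on psi turns into the two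
   boundary conditions on psi_lam = psi / c.  Conversely psi_lam' = -i lam psi_lam + i v on
   each half-line, so under the boundary conditions (which say c = 1) psi_lam is an
   eigenfunction; it is nontrivial because its one-sided limits at 0 do not both vanish. *)

lemma sigma_finite_lebesgue: "sigma_finite_measure (lebesgue :: real measure)"
proof
  obtain A :: "real set set" where "countable A" "A \<subseteq> sets lborel" "\<Union> A = space lborel"
    "\<forall>a\<in>A. emeasure lborel a \<noteq> \<infinity>"
    using lborel.sigma_finite_countable by blast
  then show "\<exists>A. countable A \<and> A \<subseteq> sets (lebesgue :: real measure) \<and> \<Union> A = space lebesgue \<and>
      (\<forall>a\<in>A. emeasure lebesgue a \<noteq> \<infinity>)"
    by (intro exI[of _ A]) (auto simp: emeasure_completion)
qed

interpretation lebesgue_pair: pair_sigma_finite "lebesgue :: real measure" "lebesgue :: real measure"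
  unfolding pair_sigma_finite_def using sigma_finite_lebesgue by blast

lemma borel_measurable_fst_lebesgue [measurable]:
  "fst \<in> borel_measurable (lebesgue \<Otimes>\<^sub>M (lebesgue :: real measure))"
  using measurable_compose[OF measurable_fst id_borel_measurable_lebesgue] by (simp add: o_def)

lemma borel_measurable_snd_lebesgue [measurable]:
  "snd \<in> borel_measurable ((lebesgue :: real measure) \<Otimes>\<^sub>M lebesgue)"
  using measurable_compose[OF measurable_snd id_borel_measurable_lebesgue] by (simp add: o_def)

(* The factor indicator {a..b} t is 1 on the triangle; it is there to make the kernel
   measurable, as f is only assumed integrable on [a, b]. *)
lemma integrable_triangle_kernel:
  fixes f h :: "real \<Rightarrow> complex"
  assumes f: "set_integrable lebesgue {a..b} f" and [measurable]: "h \<in> borel_measurable lebesgue"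
    and h_bound: "\<And>s. norm (h s) \<le> B"
  shows "integrable (lebesgue \<Otimes>\<^sub>M lebesgue)
    (\<lambda>(s, t). if a \<le> t \<and> t \<le> s \<and> s \<le> b then h s * (indicator {a..b} t *\<^sub>R f t) else 0)"
proof -
  define F where "F t = indicator {a..b} t *\<^sub>R f t" for t
  have [measurable]: "F \<in> borel_measurable lebesgue" and F: "integrable lebesgue F"
    using f by (auto simp: set_integrable_def F_def[abs_def] borel_measurable_integrable)
  have B: "0 \<le> B" using h_bound[of 0] norm_ge_zero order_trans by blast
  define G where "G s t = indicator {a..b} s * (B * norm (F t))" for s t :: real
  have G: "integrable (lebesgue \<Otimes>\<^sub>M lebesgue) (case_prod G)"
  proof (rule lebesgue_pair.Fubini_integrable)
    show "case_prod G \<in> borel_measurable (lebesgue \<Otimes>\<^sub>M lebesgue)" unfolding G_def by measurable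
    have "(\<lambda>s. \<integral>t. norm (G s t) \<partial>lebesgue) = (\<lambda>s. indicator {a..b} s * (B * (\<integral>t. norm (F t) \<partial>lebesgue)))"
      using B by (auto simp: G_def fun_eq_iff abs_mult indicator_def)
    then show "integrable lebesgue (\<lambda>s. \<integral>t. norm (case_prod G (s, t)) \<partial>lebesgue)"
      by (simp add: integrable_real_indicator emeasure_lborel_Icc_eq)
    show "AE s in lebesgue. integrable lebesgue (\<lambda>t. case_prod G (s, t))"
      unfolding G_def using F by auto
  qed
  show ?thesis
    unfolding F_def[symmetric]
  proof (rule Bochner_Integration.integrable_bound[OF G], measurable, rule AE_I2)
    fix p :: "real \<times> real"
    show "norm (case p of (s, t) \<Rightarrow> if a \<le> t \<and> t \<le> s \<and> s \<le> b then h s * F t else 0)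
        \<le> norm (case_prod G p)"
      using B h_bound[of "fst p"]
      by (cases p) (auto simp: G_def norm_mult intro!: mult_right_mono)
  qed
qed

lemma set_integral_swap_triangle:
  fixes f h :: "real \<Rightarrow> complex"
  assumes f: "set_integrable lebesgue {a..b} f" and h_meas: "h \<in> borel_measurable lebesgue"
    and h_bound: "\<And>s. norm (h s) \<le> B"
  shows "set_integrable lebesgue {a..b} (\<lambda>s. h s * (LINT t:{a..s}|lebesgue. f t))"
    and "(LINT s:{a..b}|lebesgue. h s * (LINT t:{a..s}|lebesgue. f t))
         = (LINT t:{a..b}|lebesgue. f t * (LINT s:{t..b}|lebesgue. h s))"
proof -
  define k where "k s t = (if a \<le> t \<and> t \<le> s \<and> s \<le> b then h s * (indicator {a..b} t *\<^sub>R f t) else 0)"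
    for s t
  have k: "integrable (lebesgue \<Otimes>\<^sub>M lebesgue) (case_prod k)"
    unfolding k_def using integrable_triangle_kernel[OF f h_meas h_bound] by simp
  have inner_t: "(\<integral>t. k s t \<partial>lebesgue) = indicator {a..b} s *\<^sub>R (h s * (LINT t:{a..s}|lebesgue. f t))" for s
  proof (cases "a \<le> s \<and> s \<le> b")
    case True
    then have "(\<lambda>t. k s t) = (\<lambda>t. h s * (indicator {a..s} t *\<^sub>R f t))"
      by (auto simp: k_def fun_eq_iff indicator_def)
    with True show ?thesis
      using integral_mult_right_zero[where M=lebesgue and c="h s" and f="\<lambda>t. indicator {a..s} t *\<^sub>R f t"]
      by (simp add: set_lebesgue_integral_def)
  next
    case False
    then have "(\<lambda>t. k s t) = (\<lambda>t. 0)" by (auto simp: k_def fun_eq_iff)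
    with False show ?thesis by simp
  qed
  have inner_s: "(\<integral>s. k s t \<partial>lebesgue) = indicator {a..b} t *\<^sub>R (f t * (LINT s:{t..b}|lebesgue. h s))" for t
  proof (cases "a \<le> t \<and> t \<le> b")
    case True
    then have "(\<lambda>s. k s t) = (\<lambda>s. f t * (indicator {t..b} s *\<^sub>R h s))"
      by (auto simp: k_def fun_eq_iff indicator_def)
    with True show ?thesis
      using integral_mult_right_zero[where M=lebesgue and c="f t" and f="\<lambda>s. indicator {t..b} s *\<^sub>R h s"]
      by (simp add: set_lebesgue_integral_def)
  next
    case False
    then have "(\<lambda>s. k s t) = (\<lambda>s. 0)" by (auto simp: k_def fun_eq_iff)
    with False show ?thesis by simp
  qed
  show "set_integrable lebesgue {a..b} (\<lambda>s. h s * (LINT t:{a..s}|lebesgue. f t))"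
    using lebesgue_pair.integrable_fst'[OF k] by (simp add: inner_t set_integrable_def)
  have "(\<integral>t. (\<integral>s. k s t \<partial>lebesgue) \<partial>lebesgue) = (\<integral>s. (\<integral>t. k s t \<partial>lebesgue) \<partial>lebesgue)"
    using lebesgue_pair.Fubini_integral[of k] k by simp
  then show "(LINT s:{a..b}|lebesgue. h s * (LINT t:{a..s}|lebesgue. f t))
         = (LINT t:{a..b}|lebesgue. f t * (LINT s:{t..b}|lebesgue. h s))"
    by (simp add: inner_t inner_s set_lebesgue_integral_def)
qed

lemma set_integrable_bounded_mult:
  fixes f g :: "real \<Rightarrow> complex"
  assumes f: "set_integrable lebesgue S f" and [measurable]: "g \<in> borel_measurable lebesgue"
    and g_bound: "\<And>x. norm (g x) \<le> B"
  shows "set_integrable lebesgue S (\<lambda>x. g x * f x)"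
proof (rule set_integrable_bound)
  show "set_integrable lebesgue S (\<lambda>x. of_real B * f x)"
    using f by simp
  have [measurable]: "(\<lambda>x. indicator S x *\<^sub>R f x) \<in> borel_measurable lebesgue"
    using f by (simp add: set_integrable_def borel_measurable_integrable)
  have "(\<lambda>x. g x * (indicator S x *\<^sub>R f x)) \<in> borel_measurable lebesgue" by measurable
  then show "set_borel_measurable lebesgue S (\<lambda>x. g x * f x)"
    by (simp add: set_borel_measurable_def mult.left_commute)
  show "AE x in lebesgue. x \<in> S \<longrightarrow> norm (g x * f x) \<le> norm (of_real B * f x)"
    using g_bound order_trans[OF g_bound abs_ge_self]
    by (auto simp: norm_mult intro!: mult_right_mono)
qed

lemma set_integral_Icc_split:
  fixes f :: "real \<Rightarrow> 'b::euclidean_space"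
  assumes f: "set_integrable lebesgue {a..b} f" and "a \<le> c" "c \<le> b"
  shows "(LINT t:{a..b}|lebesgue. f t) = (LINT t:{a..c}|lebesgue. f t) + (LINT t:{c..b}|lebesgue. f t)"
proof -
  have "set_integrable lebesgue {a..c} f" "set_integrable lebesgue {c..b} f"
    using assms by (auto intro: set_integrable_subset[OF f])
  moreover have "integral {a..c} f + integral {c..b} f = integral {a..b} f"
    using assms set_lebesgue_integral_eq_integral(1)[OF f] by (intro Henstock_Kurzweil_Integration.integral_combine) auto
  ultimately show ?thesis
    using f by (simp add: set_lebesgue_integral_eq_integral(2))
qed

lemma set_integral_Icc_reflect:
  fixes f :: "real \<Rightarrow> complex"
  shows "(LINT t:{x..y}|lebesgue. f t) = (LINT t:{-y..-x}|lebesgue. f (- t))"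
proof -
  have "(LINT t:{x..y}|lebesgue. f t)
      = \<bar>-1\<bar> *\<^sub>R (\<integral>t. indicator {x..y} (0 + (-1) * t) *\<^sub>R f (0 + (-1) * t) \<partial>lebesgue)"
    unfolding set_lebesgue_integral_def by (rule lebesgue_integral_real_affine) simp
  also have "\<dots> = (LINT t:{-y..-x}|lebesgue. f (- t))"
    by (auto simp: set_lebesgue_integral_def indicator_def intro!: Bochner_Integration.integral_cong)
  finally show ?thesis .
qed

lemma set_integrable_reflect:
  fixes g :: "real \<Rightarrow> complex"
  assumes "set_integrable lebesgue {a..b} g"
  shows "set_integrable lebesgue {-b..-a} (\<lambda>t. g (- t))"
  using lebesgue_integrable_real_affine[of "\<lambda>s. indicator {a..b} s *\<^sub>R g s" "-1" 0] assms
  by (simp add: set_integrable_def indicator_def minus_le_iff le_minus_iff conj_commute)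

lemma tendsto_set_integral_unit_window:
  fixes q :: "real \<Rightarrow> real"
  assumes q: "integrable lebesgue q"
  shows "((\<lambda>R. LINT t:{R-1..R}|lebesgue. q t) \<longlongrightarrow> 0) at_top"
proof -
  have q_on: "set_integrable lebesgue S q" if "S \<in> sets lebesgue" for S
    unfolding set_integrable_def using integrable_mult_indicator[OF that q] by simp
  have lim: "((\<lambda>b. LINT t:{0..b}|lebesgue. q t) \<longlongrightarrow> (LINT t:{0..}|lebesgue. q t)) at_top"
    by (rule tendsto_set_lebesgue_integral_at_top) (auto intro: q_on)
  have shift: "filterlim (\<lambda>R::real. R - 1) at_top at_top"
    by (rule filterlim_tendsto_add_at_top[OF tendsto_const filterlim_ident, of "-1", simplified])
  have "((\<lambda>R. (LINT t:{0..R}|lebesgue. q t) - (LINT t:{0..R-1}|lebesgue. q t)) \<longlongrightarrow> 0) at_top"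
    using tendsto_diff[OF lim filterlim_compose[OF lim shift]] by simp
  moreover have "\<forall>\<^sub>F R in at_top. (LINT t:{0..R}|lebesgue. q t) - (LINT t:{0..R-1}|lebesgue. q t)
      = (LINT t:{R-1..R}|lebesgue. q t)"
    using eventually_ge_at_top[of "1::real"]
  proof eventually_elim
    case (elim R)
    then show ?case using set_integral_Icc_split[OF q_on[of "{0..R}"], of "R - 1"] by simp
  qed
  ultimately show ?thesis by (rule Lim_transform_eventually)
qed

lemma borel_measurable_cis_lebesgue [measurable]: "(\<lambda>s::real. cis (\<mu> * s)) \<in> borel_measurable lebesgue"
proof -
  have "(\<lambda>s. cis (\<mu> * s)) \<in> borel_measurable borel"
    by (intro borel_measurable_continuous_onI continuous_intros)
  from measurable_compose[OF id_borel_measurable_lebesgue this] show ?thesis by simp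
qed

lemma set_integral_cis_derivative:
  assumes "t \<le> b"
  shows "(LINT s:{t..b}|lebesgue. \<i> * \<mu> * cis (\<mu> * s)) = cis (\<mu> * b) - cis (\<mu> * t)"
proof -
  have "((\<lambda>s. cis (\<mu> * s)) has_vector_derivative \<i> * \<mu> * cis (\<mu> * s)) (at s within {t..b})" for s
    unfolding has_vector_derivative_def
    by (auto intro!: derivative_eq_intros simp: fun_eq_iff scaleR_conv_of_real algebra_simps)
  then have "((\<lambda>s. \<i> * \<mu> * cis (\<mu> * s)) has_integral cis (\<mu> * b) - cis (\<mu> * t)) {t..b}"
    using assms by (intro fundamental_theorem_of_calculus) auto
  moreover have "set_integrable lebesgue {t..b} (\<lambda>s. \<i> * \<mu> * cis (\<mu> * s))"
    by (intro absolutely_integrable_continuous_real continuous_intros)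
  ultimately show ?thesis
    by (metis set_lebesgue_integral_eq_integral(2) integral_unique)
qed

lemma set_integral_cis_derivative_times_integral:
  fixes f :: "real \<Rightarrow> complex"
  assumes f: "set_integrable lebesgue {a..b} f"
  shows "set_integrable lebesgue {a..b} (\<lambda>s. \<i> * \<mu> * cis (\<mu> * s) * (LINT t:{a..s}|lebesgue. f t))"
    and "(LINT s:{a..b}|lebesgue. \<i> * \<mu> * cis (\<mu> * s) * (LINT t:{a..s}|lebesgue. f t))
      = (LINT t:{a..b}|lebesgue. f t * (cis (\<mu> * b) - cis (\<mu> * t)))"
proof -
  have meas: "(\<lambda>s. \<i> * \<mu> * cis (\<mu> * s)) \<in> borel_measurable lebesgue"
    by measurable
  have bound: "norm (\<i> * \<mu> * cis (\<mu> * s)) \<le> \<bar>\<mu>\<bar>" for s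
    by (simp add: norm_mult)
  note swap = set_integral_swap_triangle[OF f meas bound]
  then show "set_integrable lebesgue {a..b} (\<lambda>s. \<i> * \<mu> * cis (\<mu> * s) * (LINT t:{a..s}|lebesgue. f t))"
    by blast
  have "(LINT t:{a..b}|lebesgue. f t * (LINT s:{t..b}|lebesgue. \<i> * \<mu> * cis (\<mu> * s)))
      = (LINT t:{a..b}|lebesgue. f t * (cis (\<mu> * b) - cis (\<mu> * t)))"
    by (rule set_lebesgue_integral_cong)
      (simp_all add: set_integral_cis_derivative del: set_integral_mult_right)
  with swap(2) show "(LINT s:{a..b}|lebesgue. \<i> * \<mu> * cis (\<mu> * s) * (LINT t:{a..s}|lebesgue. f t))
      = (LINT t:{a..b}|lebesgue. f t * (cis (\<mu> * b) - cis (\<mu> * t)))"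
    by simp
qed

lemma cis_product_rule:
  fixes \<psi> f :: "real \<Rightarrow> complex"
  assumes "a \<le> b" and f: "set_integrable lebesgue {a..b} f"
    and \<psi>: "\<And>s. s \<in> {a..b} \<Longrightarrow> \<psi> s = \<psi> a + (LINT t:{a..s}|lebesgue. f t)"
  shows "cis (\<mu> * b) * \<psi> b - cis (\<mu> * a) * \<psi> a
    = (LINT s:{a..b}|lebesgue. cis (\<mu> * s) * f s + \<i> * \<mu> * cis (\<mu> * s) * \<psi> s)"
proof -
  define h where "h s = \<i> * \<mu> * cis (\<mu> * s)" for s
  note swap = set_integral_cis_derivative_times_integral[OF f, of \<mu>, folded h_def]
  have h_int: "set_integrable lebesgue {a..b} (\<lambda>s. h s * \<psi> a)"
    unfolding h_def by (intro absolutely_integrable_continuous_real continuous_intros)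
  have cis_f_int: "set_integrable lebesgue {a..b} (\<lambda>s. cis (\<mu> * s) * f s)"
    by (rule set_integrable_bounded_mult[OF f, where B=1]) simp_all
  have h\<psi>: "h s * \<psi> s = h s * \<psi> a + h s * (LINT t:{a..s}|lebesgue. f t)" if "s \<in> {a..b}" for s
    unfolding \<psi>[OF that] by (rule distrib_left)
  have "set_integrable lebesgue {a..b} (\<lambda>s. h s * \<psi> a + h s * (LINT t:{a..s}|lebesgue. f t))"
    by (rule set_integral_add(1)[OF h_int swap(1)])
  moreover have "set_integrable lebesgue {a..b} (\<lambda>s. h s * \<psi> s)
      = set_integrable lebesgue {a..b} (\<lambda>s. h s * \<psi> a + h s * (LINT t:{a..s}|lebesgue. f t))"
    by (rule set_integrable_cong) (simp_all add: h\<psi>)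
  ultimately have h\<psi>_int: "set_integrable lebesgue {a..b} (\<lambda>s. h s * \<psi> s)"
    by simp
  have "(LINT s:{a..b}|lebesgue. h s * \<psi> s)
      = (LINT s:{a..b}|lebesgue. h s * \<psi> a + h s * (LINT t:{a..s}|lebesgue. f t))"
    by (rule set_lebesgue_integral_cong) (simp_all add: h\<psi>)
  also have "\<dots> = (LINT s:{a..b}|lebesgue. h s * \<psi> a)
      + (LINT t:{a..b}|lebesgue. f t * (cis (\<mu> * b) - cis (\<mu> * t)))"
    by (simp only: set_integral_add(2)[OF h_int swap(1)] swap(2))
  also have "(LINT s:{a..b}|lebesgue. h s * \<psi> a) = (cis (\<mu> * b) - cis (\<mu> * a)) * \<psi> a"
    using set_integral_cis_derivative[OF \<open>a \<le> b\<close>] by (simp add: h_def)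
  also have "(LINT t:{a..b}|lebesgue. f t * (cis (\<mu> * b) - cis (\<mu> * t)))
      = (LINT t:{a..b}|lebesgue. cis (\<mu> * b) * f t - cis (\<mu> * t) * f t)"
    by (rule set_lebesgue_integral_cong) (simp_all add: algebra_simps)
  also have "\<dots> = cis (\<mu> * b) * (\<psi> b - \<psi> a) - (LINT t:{a..b}|lebesgue. cis (\<mu> * t) * f t)"
  proof -
    have "set_integrable lebesgue {a..b} (\<lambda>t. cis (\<mu> * b) * f t)" using f by simp
    then show ?thesis
      using \<psi>[of b] \<open>a \<le> b\<close> by (simp add: set_integral_diff(2)[OF _ cis_f_int])
  qed
  finally have "(LINT s:{a..b}|lebesgue. h s * \<psi> s)
      = cis (\<mu> * b) * \<psi> b - cis (\<mu> * a) * \<psi> a - (LINT t:{a..b}|lebesgue. cis (\<mu> * t) * f t)"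
    by (simp add: algebra_simps)
  then show ?thesis
    using set_integral_add(2)[OF cis_f_int h\<psi>_int] by (simp add: h_def)
qed

lemma sq_int_set_integrable:
  assumes f: "sq_int f" and S: "S \<in> sets lebesgue" "emeasure lebesgue S < \<infinity>"
  shows "set_integrable lebesgue S f"
proof (rule set_integrable_bound)
  have "set_integrable lebesgue S (\<lambda>x. 1 :: real)"
    using S by (simp add: set_integrable_def integrable_real_indicator)
  moreover have "set_integrable lebesgue S (\<lambda>x. (cmod (f x))\<^sup>2)"
    using f integrable_mult_indicator[OF S(1), of "\<lambda>x. (cmod (f x))\<^sup>2"]
    by (simp add: sq_int_def set_integrable_def)
  ultimately show "set_integrable lebesgue S (\<lambda>x. 1 + (cmod (f x))\<^sup>2)"
    by (rule set_integral_add(1))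
  have [measurable]: "f \<in> borel_measurable lebesgue" using f by (simp add: sq_int_def)
  show "set_borel_measurable lebesgue S f"
    unfolding set_borel_measurable_def using S(1) by measurable
  have "c \<le> 1 + c\<^sup>2" for c :: real
    using zero_le_power2[of "c - 1/2"] by (simp add: power2_eq_square algebra_simps)
  then show "AE x in lebesgue. x \<in> S \<longrightarrow> norm (f x) \<le> norm (1 + (cmod (f x))\<^sup>2)"
    by simp
qed

corollary sq_int_set_integrable_Icc: "sq_int f \<Longrightarrow> set_integrable lebesgue {a..b} f"
  by (rule sq_int_set_integrable) (auto simp: emeasure_lborel_Icc_eq)

lemma sq_int_linear_combination:
  assumes f: "sq_int f" and g: "sq_int g"
  shows "sq_int (\<lambda>x. a * f x + b * g x)"
proof -
  have [measurable]: "f \<in> borel_measurable lebesgue" "g \<in> borel_measurable lebesgue"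
    using f g by (auto simp: sq_int_def)
  have sq_sum: "(cmod (u + w))\<^sup>2 \<le> 2 * (cmod u)\<^sup>2 + 2 * (cmod w)\<^sup>2" for u w :: complex
  proof -
    have "(cmod (u + w))\<^sup>2 \<le> (cmod u + cmod w)\<^sup>2"
      using norm_triangle_ineq[of u w] by (simp add: power_mono)
    also have "\<dots> \<le> 2 * (cmod u)\<^sup>2 + 2 * (cmod w)\<^sup>2"
      using zero_le_power2[of "cmod u - cmod w"] by (simp add: power2_eq_square algebra_simps)
    finally show ?thesis .
  qed
  have "integrable lebesgue (\<lambda>x. 2 * ((cmod a)\<^sup>2 * (cmod (f x))\<^sup>2) + 2 * ((cmod b)\<^sup>2 * (cmod (g x))\<^sup>2))"
    using f g by (simp add: sq_int_def)
  then have "integrable lebesgue (\<lambda>x. (cmod (a * f x + b * g x))\<^sup>2)"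
  proof (rule Bochner_Integration.integrable_bound, measurable, intro AE_I2)
    fix x
    have "(cmod (a * f x + b * g x))\<^sup>2 \<le> 2 * (cmod (a * f x))\<^sup>2 + 2 * (cmod (b * g x))\<^sup>2"
      by (rule sq_sum)
    then show "norm ((cmod (a * f x + b * g x))\<^sup>2)
        \<le> norm (2 * ((cmod a)\<^sup>2 * (cmod (f x))\<^sup>2) + 2 * ((cmod b)\<^sup>2 * (cmod (g x))\<^sup>2))"
      by (simp add: norm_mult power_mult_distrib)
  qed
  then show ?thesis by (simp add: sq_int_def)
qed

lemma sq_int_cong_AE:
  assumes "sq_int f" and [measurable]: "g \<in> borel_measurable lebesgue"
    and "AE x in lebesgue. f x = g x"
  shows "sq_int g"
proof -
  have "integrable lebesgue (\<lambda>x. (cmod (g x))\<^sup>2)"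
    by (rule integrable_cong_AE_imp[of lebesgue "\<lambda>x. (cmod (f x))\<^sup>2"])
      (use assms in \<open>auto simp: sq_int_def elim: eventually_mono\<close>)
  then show ?thesis by (simp add: sq_int_def)
qed

lemma sq_int_reflect:
  assumes "sq_int f"
  shows "sq_int (\<lambda>x. f (- x))"
proof -
  have "(\<lambda>x. f (0 + (-1) *\<^sub>R x)) \<in> borel_measurable lebesgue"
    by (rule borel_measurable_affine) (use assms in \<open>auto simp: sq_int_def\<close>)
  moreover have "integrable lebesgue (\<lambda>x. (cmod (f (0 + (-1) * x)))\<^sup>2)"
    by (rule lebesgue_integrable_real_affine) (use assms in \<open>auto simp: sq_int_def\<close>)
  ultimately show ?thesis by (simp add: sq_int_def)
qed

lemma sq_int_set_integrable_cis_mult: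
  "sq_int v \<Longrightarrow> set_integrable lebesgue {a..b} (\<lambda>t. cis (\<mu> * t) * v t)"
  by (rule set_integrable_bounded_mult[OF sq_int_set_integrable_Icc, where B=1]) simp_all

lemma Lim_at_bot_mirror: "Lim at_bot f = Lim at_top (\<lambda>x. f (- x :: real))"
  unfolding t2_space_class.Lim_def filterlim_at_bot_mirror ..

(* No hypothesis c \<noteq> 0: for c = 0 the assumption forces L = 0. *)
lemma mult_Lim_eq:
  fixes f :: "'a \<Rightarrow> 'b::real_normed_field"
  assumes lim: "((\<lambda>x. c * f x) \<longlongrightarrow> L) F" and F: "F \<noteq> bot"
  shows "c * Lim F f = L"
proof (cases "c = 0")
  case True
  with lim have "((\<lambda>x. 0) \<longlongrightarrow> L) F" by simp
  with F have "L = 0" using tendsto_unique[OF F _ tendsto_const] by blast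
  with True show ?thesis by simp
next
  case False
  with lim have "(f \<longlongrightarrow> L / c) F"
    using tendsto_mult_left_iff[OF False, of f "L / c"] by simp
  then have "Lim F f = L / c" by (rule tendsto_Lim[OF F])
  with False show ?thesis by simp
qed

lemma Lim_at_0_within_cmult:
  fixes f g :: "real \<Rightarrow> complex"
  assumes f: "(f \<longlongrightarrow> Lim (at 0 within A) f) (at 0 within A)" and A: "\<not> trivial_limit (at 0 within A)"
    and fg: "\<And>x. x \<noteq> 0 \<Longrightarrow> f x = c * g x" and c: "c \<noteq> 0"
  shows "Lim (at 0 within A) f = c * Lim (at 0 within A) g"
proof -
  have "((\<lambda>x. f x / c) \<longlongrightarrow> Lim (at 0 within A) f / c) (at 0 within A)"
    by (intro tendsto_divide f tendsto_const c)
  moreover have "\<forall>\<^sub>F x in at 0 within A. f x / c = g x"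
    using eventually_neq_at_within[of 0 0 A] by (rule eventually_mono) (simp add: fg c)
  ultimately have "(g \<longlongrightarrow> Lim (at 0 within A) f / c) (at 0 within A)"
    by (rule Lim_transform_eventually)
  then have "Lim (at 0 within A) g = Lim (at 0 within A) f / c"
    by (rule tendsto_Lim[OF A])
  with c show ?thesis by simp
qed

lemma AE_lebesgue_nonzero: "AE x in lebesgue. x \<noteq> (0::real)"
  by (rule AE_completion[OF AE_lborel_singleton])

lemma tendsto_at_right_AE_zero:
  fixes f :: "real \<Rightarrow> 'a::real_normed_vector"
  assumes lim: "(f \<longlongrightarrow> L) (at_right a)" and ae: "AE x in lebesgue. f x = 0"
  shows "L = 0"
proof (rule ccontr)
  assume "L \<noteq> 0"
  with lim have "\<forall>\<^sub>F x in at_right a. f x \<noteq> 0"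
    by (rule tendsto_imp_eventually_ne)
  then obtain b where "a < b" and b: "\<And>x. a < x \<Longrightarrow> x < b \<Longrightarrow> f x \<noteq> 0"
    by (auto simp: eventually_at_right[OF less_add_one])
  with ae have "AE x in lebesgue. x \<notin> {a<..<b}"
    by (auto elim: eventually_mono)
  then have "emeasure lebesgue {a<..<b} = 0"
    by (subst (asm) AE_iff_measurable[of "{a<..<b}"]) auto
  with \<open>a < b\<close> show False by simp
qed

lemma tendsto_at_left_AE_zero:
  fixes f :: "real \<Rightarrow> 'a::real_normed_vector"
  assumes lim: "(f \<longlongrightarrow> L) (at_left a)" and ae: "AE x in lebesgue. f x = 0"
  shows "L = 0"
proof (rule ccontr)
  assume "L \<noteq> 0"
  with lim have "\<forall>\<^sub>F x in at_left a. f x \<noteq> 0"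
    by (rule tendsto_imp_eventually_ne)
  then obtain b where "b < a" and b: "\<And>x. b < x \<Longrightarrow> x < a \<Longrightarrow> f x \<noteq> 0"
    by (auto simp: eventually_at_left[of "a - 1"])
  with ae have "AE x in lebesgue. x \<notin> {b<..<a}"
    by (auto elim: eventually_mono)
  then have "emeasure lebesgue {b<..<a} = 0"
    by (subst (asm) AE_iff_measurable[of "{b<..<a}"]) auto
  with \<open>b < a\<close> show False by simp
qed

lemma l2_inner_cmult_AE:
  assumes "AE x in lebesgue. f x = c * g x" and [measurable]: "f \<in> borel_measurable lebesgue"
    "g \<in> borel_measurable lebesgue" "v \<in> borel_measurable lebesgue"
  shows "l2_inner f v = c * l2_inner g v"
proof -
  have "cnj \<in> borel_measurable borel"
    by (intro borel_measurable_continuous_onI continuous_intros)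
  with \<open>v \<in> borel_measurable lebesgue\<close> have [measurable]: "(\<lambda>x. cnj (v x)) \<in> borel_measurable lebesgue"
    by (rule measurable_compose)
  have "l2_inner f v = (LINT x|lebesgue. c * (g x * cnj (v x)))"
    unfolding l2_inner_def by (rule integral_cong_AE) (use assms(1) in \<open>auto elim: eventually_mono\<close>)
  then show ?thesis
    unfolding l2_inner_def by simp
qed

definition primitive_on :: "real set \<Rightarrow> (real \<Rightarrow> complex) \<Rightarrow> (real \<Rightarrow> complex) \<Rightarrow> bool" where
  "primitive_on S \<psi> g \<longleftrightarrow> (\<forall>x\<in>S. \<forall>y\<in>S. x \<le> y \<longrightarrow> \<psi> y - \<psi> x = (LINT t:{x..y}|lebesgue. g t))"

lemma W21_Omega_iff_primitive_on:
  "W21_Omega \<psi> d\<psi> \<longleftrightarrow> sq_int \<psi> \<and> sq_int d\<psi> \<and> primitive_on {0<..} \<psi> d\<psi> \<and> primitive_on {..<0} \<psi> d\<psi>"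
  unfolding W21_Omega_def primitive_on_def by (auto 6 0)

lemma primitive_on_cong_AE:
  assumes "primitive_on S \<psi> g" "AE t in lebesgue. g t = h t"
    and "g \<in> borel_measurable lebesgue" "h \<in> borel_measurable lebesgue"
  shows "primitive_on S \<psi> h"
  using assms unfolding primitive_on_def
  by (auto intro!: set_lebesgue_integral_cong_AE elim: eventually_mono)

lemma primitive_on_cmult:
  "primitive_on S \<psi> g \<Longrightarrow> primitive_on S (\<lambda>t. c * \<psi> t) (\<lambda>t. c * g t)"
  unfolding primitive_on_def by (simp flip: right_diff_distrib)

lemma primitive_on_reflect:
  assumes "primitive_on S \<psi> g"
  shows "primitive_on (uminus ` S) (\<lambda>t. \<psi> (- t)) (\<lambda>t. - g (- t))"
  unfolding primitive_on_def
proof (intro ballI impI)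
  fix x y assume "x \<in> uminus ` S" "y \<in> uminus ` S" "x \<le> y"
  then have "\<psi> (- x) - \<psi> (- y) = (LINT t:{-y..-x}|lebesgue. g t)"
    using assms by (auto simp: primitive_on_def)
  then have "\<psi> (- y) - \<psi> (- x) = - (LINT t:{-y..-x}|lebesgue. g t)"
    by (metis minus_diff_eq)
  also have "\<dots> = (LINT t:{x..y}|lebesgue. - g (- t))"
    using set_integral_Icc_reflect[where f=g and x="-y" and y="-x"] by (simp add: set_lebesgue_integral_def)
  finally show "\<psi> (- y) - \<psi> (- x) = (LINT t:{x..y}|lebesgue. - g (- t))" .
qed

lemma primitive_on_tendsto_at_right_0:
  assumes g: "set_integrable lebesgue {0..1} g" and \<psi>: "primitive_on {0<..} \<psi> g"
  shows "(\<psi> \<longlongrightarrow> \<psi> 1 - (LINT t:{0<..1}|lebesgue. g t)) (at_right 0)"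
proof -
  have "((\<lambda>a. LINT t:{a..1}|lebesgue. g t) \<longlongrightarrow> (LINT t:{0<..1}|lebesgue. g t)) (at_right 0)"
    by (rule tendsto_set_lebesgue_integral_at_right) (auto intro: set_integrable_subset[OF g])
  then have "((\<lambda>a. \<psi> 1 - (LINT t:{a..1}|lebesgue. g t)) \<longlongrightarrow> \<psi> 1 - (LINT t:{0<..1}|lebesgue. g t)) (at_right 0)"
    by (intro tendsto_intros)
  moreover have "\<forall>\<^sub>F a in at_right 0. \<psi> 1 - (LINT t:{a..1}|lebesgue. g t) = \<psi> a"
    using eventually_at_right_real[OF zero_less_one]
  proof (rule eventually_mono)
    fix a :: real assume "a \<in> {0<..<1}"
    then have eq: "\<psi> 1 - \<psi> a = (LINT t:{a..1}|lebesgue. g t)"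
      using \<psi> by (simp add: primitive_on_def)
    show "\<psi> 1 - (LINT t:{a..1}|lebesgue. g t) = \<psi> a"
      unfolding eq[symmetric] by simp
  qed
  ultimately show ?thesis by (rule Lim_transform_eventually)
qed

lemma primitive_on_tendsto_at_left_0:
  assumes g: "set_integrable lebesgue {-1..0} g" and \<psi>: "primitive_on {..<0} \<psi> g"
  shows "\<exists>L. (\<psi> \<longlongrightarrow> L) (at_left 0)"
proof -
  have "set_integrable lebesgue {0..1} (\<lambda>t. - g (- t))"
    using set_integrable_reflect[OF g] by (simp add: set_integrable_def)
  moreover have "primitive_on {0<..} (\<lambda>t. \<psi> (- t)) (\<lambda>t. - g (- t))"
    using primitive_on_reflect[OF \<psi>] by simp
  ultimately have "((\<lambda>t. \<psi> (- t)) \<longlongrightarrow> \<psi> (- 1) - (LINT t:{0<..1}|lebesgue. - g (- t))) (at_right 0)"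
    using primitive_on_tendsto_at_right_0 by fastforce
  then show ?thesis by (auto simp: filterlim_at_left_to_right[of \<psi>])
qed

lemma primitive_on_norm_le_window:
  assumes \<psi>: "primitive_on {0<..} \<psi> g" and R: "1 < R"
    and \<psi>_int: "set_integrable lebesgue {R-1..R} \<psi>" and g_int: "set_integrable lebesgue {R-1..R} g"
  shows "norm (\<psi> R) \<le> (LINT t:{R-1..R}|lebesgue. norm (\<psi> t)) + (LINT t:{R-1..R}|lebesgue. norm (g t))"
proof -
  define N where "N = (LINT t:{R-1..R}|lebesgue. norm (g t))"
  have g_norm_int: "set_integrable lebesgue {R-1..R} (\<lambda>t. norm (g t))"
    using g_int by (rule set_integrable_norm)
  have pointwise: "norm (\<psi> R) \<le> norm (\<psi> t) + N" if t: "t \<in> {R-1..R}" for t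
  proof -
    have "\<psi> R - \<psi> t = (LINT s:{t..R}|lebesgue. g s)"
      using \<psi> t R by (simp add: primitive_on_def)
    then have "norm (\<psi> R) \<le> norm (\<psi> t) + norm (LINT s:{t..R}|lebesgue. g s)"
      by (metis diff_add_cancel norm_triangle_ineq add.commute)
    also have "norm (LINT s:{t..R}|lebesgue. g s) \<le> (LINT s:{t..R}|lebesgue. norm (g s))"
      using t by (intro set_integral_norm_bound set_integrable_subset[OF g_int]) auto
    also have "\<dots> \<le> N"
    proof -
      have "0 \<le> (LINT s:{R-1..t}|lebesgue. norm (g s))"
        unfolding set_lebesgue_integral_def by (intro integral_nonneg_AE) (simp add: indicator_def)
      then show ?thesis
        using set_integral_Icc_split[OF g_norm_int, of t] t by (simp add: N_def)
    qed
    finally show ?thesis by simp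
  qed
  have "norm (\<psi> R) = (LINT t:{R-1..R}|lebesgue. norm (\<psi> R))"
    using R by (simp add: set_integral_const emeasure_lborel_Icc_eq)
  also have "\<dots> \<le> (LINT t:{R-1..R}|lebesgue. norm (\<psi> t) + N)"
    using pointwise \<psi>_int by (intro set_integral_mono set_integral_add(1) set_integrable_norm)
      (auto simp: set_integrable_def integrable_real_indicator emeasure_lborel_Icc_eq)
  also have "\<dots> = (LINT t:{R-1..R}|lebesgue. norm (\<psi> t)) + N"
    using R set_integral_add(2)[OF set_integrable_norm[OF \<psi>_int], of "\<lambda>_. N"]
    by (simp add: set_integral_const set_integrable_def integrable_real_indicator emeasure_lborel_Icc_eq)
  finally show ?thesis by (simp add: N_def)
qed

lemma sq_int_window_integral_tendsto_0:
  assumes h: "sq_int h"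
  shows "((\<lambda>R. LINT t:{R-1..R}|lebesgue. norm (h t)) \<longlongrightarrow> 0) at_top"
proof (rule tendstoI)
  fix \<epsilon> :: real assume \<epsilon>: "\<epsilon> > 0"
  define Q where "Q R = (LINT t:{R-1..R}|lebesgue. (norm (h t))\<^sup>2)" for R
  have am_gm: "c \<le> \<epsilon> / 2 + c\<^sup>2 / (2 * \<epsilon>)" for c :: real
    using zero_le_power2[of "c - \<epsilon>"] \<epsilon> by (simp add: field_simps power2_eq_square)
  have bound: "(LINT t:{R-1..R}|lebesgue. norm (h t)) \<le> \<epsilon> / 2 + Q R / (2 * \<epsilon>)" for R
  proof -
    have sq_int: "set_integrable lebesgue {R-1..R} (\<lambda>t. (norm (h t))\<^sup>2)"
      using h integrable_mult_indicator[of "{R-1..R}" lebesgue "\<lambda>t. (norm (h t))\<^sup>2"]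
      by (simp add: sq_int_def set_integrable_def)
    have const_int: "set_integrable lebesgue {R-1..R} (\<lambda>t. \<epsilon> / 2)"
      by (simp add: set_integrable_def integrable_real_indicator emeasure_lborel_Icc_eq)
    have "(LINT t:{R-1..R}|lebesgue. norm (h t))
        \<le> (LINT t:{R-1..R}|lebesgue. \<epsilon> / 2 + (norm (h t))\<^sup>2 / (2 * \<epsilon>))"
      using sq_int const_int am_gm
      by (intro set_integral_mono set_integrable_norm sq_int_set_integrable_Icc[OF h]
          set_integral_add(1) set_integrable_divide) auto
    also have "\<dots> = \<epsilon> / 2 + Q R / (2 * \<epsilon>)"
      using set_integral_add(2)[OF const_int set_integrable_divide[OF sq_int, of "2 * \<epsilon>"]]
      by (simp add: Q_def set_integral_const emeasure_lborel_Icc_eq set_integral_divide_zero)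
    finally show ?thesis .
  qed
  have "((\<lambda>R. Q R) \<longlongrightarrow> 0) at_top"
    unfolding Q_def using h by (intro tendsto_set_integral_unit_window) (simp add: sq_int_def)
  then have "\<forall>\<^sub>F R in at_top. Q R < \<epsilon>\<^sup>2"
    using \<epsilon> by (intro order_tendstoD(2)) auto
  then show "\<forall>\<^sub>F R in at_top. dist (LINT t:{R-1..R}|lebesgue. norm (h t)) 0 < \<epsilon>"
  proof eventually_elim
    case (elim R)
    have "0 \<le> (LINT t:{R-1..R}|lebesgue. norm (h t))"
      unfolding set_lebesgue_integral_def by (intro integral_nonneg_AE) (simp add: indicator_def)
    moreover have "Q R / (2 * \<epsilon>) < \<epsilon> / 2"
      using elim \<epsilon> by (simp add: field_simps power2_eq_square)
    ultimately show ?case using bound[of R] by simp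
  qed
qed

lemma primitive_on_tendsto_0_at_top:
  assumes \<psi>: "sq_int \<psi>" and g: "sq_int g" and prim: "primitive_on {0<..} \<psi> g"
  shows "(\<psi> \<longlongrightarrow> 0) at_top"
proof (rule Lim_null_comparison)
  show "\<forall>\<^sub>F R in at_top. norm (\<psi> R)
      \<le> (LINT t:{R-1..R}|lebesgue. norm (\<psi> t)) + (LINT t:{R-1..R}|lebesgue. norm (g t))"
    using eventually_gt_at_top[of 1]
    by (rule eventually_mono) (intro primitive_on_norm_le_window[OF prim] sq_int_set_integrable_Icc \<psi> g)
  show "((\<lambda>R. (LINT t:{R-1..R}|lebesgue. norm (\<psi> t)) + (LINT t:{R-1..R}|lebesgue. norm (g t))) \<longlongrightarrow> 0) at_top"
    using tendsto_add[OF sq_int_window_integral_tendsto_0[OF \<psi>] sq_int_window_integral_tendsto_0[OF g]]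
    by simp
qed

lemma kern_eq_cis: "kern v lam x y = cis (- lam * x) * (cis (lam * y) * v y)"
  unfolding kern_def cis_conv_exp by (simp add: mult_exp_exp algebra_simps)

lemma kern_reflect: "kern (\<lambda>t. v (- t)) (- lam) (- x) (- y) = kern v lam x y"
  by (simp add: kern_def algebra_simps)

lemma set_integral_kern_reflect:
  "(LINT y:{a..b}|lebesgue. kern (\<lambda>t. v (- t)) (- lam) x y) = (LINT y:{-b..-a}|lebesgue. kern v lam (- x) y)"
  using set_integral_Icc_reflect[where f="kern (\<lambda>t. v (- t)) (- lam) x" and x=a and y=b]
    kern_reflect[of v lam "- x"] by simp

lemma set_integral_kern:
  "(LINT y:{a..b}|lebesgue. kern v lam x y) = cis (- lam * x) * (LINT y:{a..b}|lebesgue. cis (lam * y) * v y)"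
  by (simp add: kern_eq_cis)

(* Variation of constants: (cis (lam t) psi t)' = i c cis (lam t) v t on (0, \<infinity>), and
   cis (lam R) psi R tends to 0 because psi does. *)
lemma primitive_ode_tendsto_at_top:
  fixes \<psi> v :: "real \<Rightarrow> complex"
  assumes \<psi>: "sq_int \<psi>" and v: "sq_int v"
    and prim: "primitive_on {0<..} \<psi> (\<lambda>t. - \<i> * lam * \<psi> t + \<i> * c * v t)" and x: "0 < x"
  shows "((\<lambda>R. \<i> * c * (LINT y:{x..R}|lebesgue. kern v lam x y)) \<longlongrightarrow> - \<psi> x) at_top"
proof -
  define g where "g t = - \<i> * lam * \<psi> t + \<i> * c * v t" for t
  have g: "sq_int g"
    unfolding g_def by (rule sq_int_linear_combination[OF \<psi> v])
  have "(\<psi> \<longlongrightarrow> 0) at_top"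
    using primitive_on_tendsto_0_at_top[OF \<psi> g] prim by (simp add: g_def[abs_def])
  then have "((\<lambda>R. norm (cis (- lam * x) * (cis (lam * R) * \<psi> R))) \<longlongrightarrow> 0) at_top"
    using tendsto_norm_zero by (simp add: norm_mult)
  then have "((\<lambda>R. cis (- lam * x) * (cis (lam * R) * \<psi> R)) \<longlongrightarrow> 0) at_top"
    by (rule tendsto_norm_zero_cancel)
  then have "((\<lambda>R. cis (- lam * x) * (cis (lam * R) * \<psi> R) - \<psi> x) \<longlongrightarrow> 0 - \<psi> x) at_top"
    by (intro tendsto_diff tendsto_const)
  moreover have "\<forall>\<^sub>F R in at_top. cis (- lam * x) * (cis (lam * R) * \<psi> R) - \<psi> x
      = \<i> * c * (LINT y:{x..R}|lebesgue. kern v lam x y)"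
    using eventually_ge_at_top[of x]
  proof eventually_elim
    case (elim R)
    have rep: "\<psi> s = \<psi> x + (LINT t:{x..s}|lebesgue. g t)" if "s \<in> {x..R}" for s
    proof -
      have "\<psi> s - \<psi> x = (LINT t:{x..s}|lebesgue. g t)"
        using prim x that unfolding primitive_on_def g_def by simp
      from this[symmetric] show ?thesis by simp
    qed
    have "cis (lam * R) * \<psi> R - cis (lam * x) * \<psi> x
        = (LINT s:{x..R}|lebesgue. cis (lam * s) * g s + \<i> * lam * cis (lam * s) * \<psi> s)"
      using elim by (intro cis_product_rule sq_int_set_integrable_Icc g rep)
    also have "\<dots> = (LINT s:{x..R}|lebesgue. \<i> * c * (cis (lam * s) * v s))"
      by (rule set_lebesgue_integral_cong) (auto simp: g_def algebra_simps)
    finally have eq: "cis (lam * R) * \<psi> R - cis (lam * x) * \<psi> x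
        = \<i> * c * (LINT s:{x..R}|lebesgue. cis (lam * s) * v s)"
      by simp
    have "cis (- lam * x) * (cis (lam * R) * \<psi> R) - \<psi> x
        = cis (- lam * x) * (cis (lam * R) * \<psi> R - cis (lam * x) * \<psi> x)"
      by (simp add: right_diff_distrib mult.assoc[symmetric] cis_mult)
    also have "\<dots> = \<i> * c * (LINT y:{x..R}|lebesgue. kern v lam x y)"
      unfolding eq by (simp add: kern_eq_cis)
    finally show ?case .
  qed
  ultimately show ?thesis by (simp add: Lim_transform_eventually)
qed

lemma primitive_ode_tendsto_at_bot:
  fixes \<psi> v :: "real \<Rightarrow> complex"
  assumes \<psi>: "sq_int \<psi>" and v: "sq_int v"
    and prim: "primitive_on {..<0} \<psi> (\<lambda>t. - \<i> * lam * \<psi> t + \<i> * c * v t)" and x: "x < 0"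
  shows "((\<lambda>R. \<i> * c * (LINT y:{R..x}|lebesgue. kern v lam x y)) \<longlongrightarrow> \<psi> x) at_bot"
proof -
  have "(\<lambda>t. - (- \<i> * lam * \<psi> (- t) + \<i> * c * v (- t)))
      = (\<lambda>t. - \<i> * of_real (- lam) * \<psi> (- t) + \<i> * (- c) * v (- t))"
    by (simp add: fun_eq_iff algebra_simps)
  then have "primitive_on {0<..} (\<lambda>t. \<psi> (- t)) (\<lambda>t. - \<i> * of_real (- lam) * \<psi> (- t) + \<i> * (- c) * v (- t))"
    using primitive_on_reflect[OF prim] by simp
  from primitive_ode_tendsto_at_top[OF sq_int_reflect[OF \<psi>] sq_int_reflect[OF v] this, of "- x"] x
  have "((\<lambda>R. - (\<i> * c * (LINT y:{-R..x}|lebesgue. kern v lam x y))) \<longlongrightarrow> - \<psi> x) at_top"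
    by (simp add: set_integral_kern_reflect)
  from tendsto_minus[OF this] show ?thesis
    by (simp add: filterlim_at_bot_mirror)
qed

lemma psi_lam_reflect: "psi_lam (\<lambda>t. v (- t)) (- lam) x = - psi_lam v lam (- x)"
  by (simp add: psi_lam_def set_integral_kern_reflect Lim_at_bot_mirror)

lemma psi_lam_exists_reflect:
  assumes ex: "psi_lam_exists v lam"
  shows "psi_lam_exists (\<lambda>t. v (- t)) (- lam)"
  unfolding psi_lam_exists_def set_integral_kern_reflect
proof (intro conjI allI impI)
  fix x :: real
  assume "0 < x"
  with ex obtain l where "((\<lambda>R. LINT y:{R..-x}|lebesgue. kern v lam (- x) y) \<longlongrightarrow> l) at_bot"
    unfolding psi_lam_exists_def by (metis neg_less_0_iff_less)
  then show "\<exists>l. ((\<lambda>R. LINT y:{-R..-x}|lebesgue. kern v lam (- x) y) \<longlongrightarrow> l) at_top"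
    by (auto simp: filterlim_at_bot_mirror)
next
  fix x :: real
  assume "x < 0"
  with ex obtain l where "((\<lambda>R. LINT y:{-x..R}|lebesgue. kern v lam (- x) y) \<longlongrightarrow> l) at_top"
    unfolding psi_lam_exists_def by (metis neg_0_less_iff_less)
  then show "\<exists>l. ((\<lambda>R. LINT y:{-x..-R}|lebesgue. kern v lam (- x) y) \<longlongrightarrow> l) at_bot"
    by (auto simp: filterlim_at_bot_mirror)
qed

lemma psi_lam_tail_integral:
  assumes ex: "psi_lam_exists v lam" and x: "0 < x"
  shows "((\<lambda>R. LINT y:{x..R}|lebesgue. cis (lam * y) * v y) \<longlongrightarrow> cis (lam * x) * (\<i> * psi_lam v lam x)) at_top"
proof -
  let ?K = "\<lambda>R. LINT y:{x..R}|lebesgue. kern v lam x y"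
  from ex x obtain l where l: "(?K \<longlongrightarrow> l) at_top"
    unfolding psi_lam_exists_def by blast
  moreover have "\<i> * psi_lam v lam x = l"
    using x tendsto_Lim[OF trivial_limit_at_top_linorder l] by (simp add: psi_lam_def)
  ultimately have "((\<lambda>R. cis (- lam * x) * (LINT y:{x..R}|lebesgue. cis (lam * y) * v y))
      \<longlongrightarrow> \<i> * psi_lam v lam x) at_top"
    unfolding set_integral_kern by simp
  then have "((\<lambda>R. cis (lam * x) * (cis (- lam * x) * (LINT y:{x..R}|lebesgue. cis (lam * y) * v y)))
      \<longlongrightarrow> cis (lam * x) * (\<i> * psi_lam v lam x)) at_top"
    by (rule tendsto_mult_left)
  then show ?thesis by (simp add: mult.assoc[symmetric] cis_mult)
qed

lemma psi_lam_tail_integral_split: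
  assumes v: "sq_int v" and ex: "psi_lam_exists v lam" and "0 < x" "x \<le> s"
  shows "cis (lam * x) * (\<i> * psi_lam v lam x)
    = (LINT t:{x..s}|lebesgue. cis (lam * t) * v t) + cis (lam * s) * (\<i> * psi_lam v lam s)"
proof -
  let ?I = "\<lambda>a b. LINT t:{a..b}|lebesgue. cis (lam * t) * v t"
  have "\<forall>\<^sub>F R in at_top. ?I x s + ?I s R = ?I x R"
    using eventually_ge_at_top[of s]
  proof (rule eventually_mono)
    fix R assume "s \<le> R"
    with \<open>x \<le> s\<close> show "?I x s + ?I s R = ?I x R"
      using set_integral_Icc_split[OF sq_int_set_integrable_cis_mult[OF v, where a=x and b=R and \<mu>=lam], of s] by simp
  qed
  moreover have "((\<lambda>R. ?I x s + ?I s R) \<longlongrightarrow> ?I x s + cis (lam * s) * (\<i> * psi_lam v lam s)) at_top"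
    using assms by (intro tendsto_add tendsto_const psi_lam_tail_integral[OF ex]) auto
  ultimately have "((\<lambda>R. ?I x R) \<longlongrightarrow> ?I x s + cis (lam * s) * (\<i> * psi_lam v lam s)) at_top"
    by (rule Lim_transform_eventually[rotated])
  with psi_lam_tail_integral[OF ex \<open>0 < x\<close>] show ?thesis
    by (rule tendsto_unique[OF trivial_limit_at_top_linorder])
qed

lemma psi_lam_primitive_pos:
  assumes v: "sq_int v" and ex: "psi_lam_exists v lam"
  shows "primitive_on {0<..} (psi_lam v lam) (\<lambda>t. - \<i> * lam * psi_lam v lam t + \<i> * v t)"
  unfolding primitive_on_def
proof (intro ballI impI)
  let ?p = "psi_lam v lam"
  fix x y :: real assume "x \<in> {0<..}" "y \<in> {0<..}" "x \<le> y"
  (* H s is the tail integral of cis (lam t) v t over [s, \<infinity>), by psi_lam_tail_integral *)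
  define H where "H s = cis (lam * s) * (\<i> * ?p s)" for s
  have H_rep: "H s = H x + (LINT t:{x..s}|lebesgue. - (cis (lam * t) * v t))" if "s \<in> {x..y}" for s
    using psi_lam_tail_integral_split[OF v ex, of x s] \<open>x \<in> {0<..}\<close> that
    by (simp add: H_def set_integral_uminus[OF sq_int_set_integrable_cis_mult[OF v]])
  have cis_H: "cis (- lam * s) * H s = \<i> * ?p s" for s
    by (simp add: H_def mult.assoc[symmetric] cis_mult)
  have "\<i> * (?p y - ?p x) = cis (- lam * y) * H y - cis (- lam * x) * H x"
    by (simp only: cis_H right_diff_distrib)
  also have "\<dots> = (LINT s:{x..y}|lebesgue. cis (- lam * s) * - (cis (lam * s) * v s)
      + \<i> * (- lam) * cis (- lam * s) * H s)"
  proof (rule cis_product_rule[OF \<open>x \<le> y\<close> _ H_rep])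
    show "set_integrable lebesgue {x..y} (\<lambda>t. - (cis (lam * t) * v t))"
      using sq_int_set_integrable_cis_mult[OF v] by (simp add: set_integrable_def)
  qed
  also have "\<dots> = (LINT s:{x..y}|lebesgue. \<i> * (- \<i> * lam * ?p s + \<i> * v s))"
  proof -
    have "cis (- lam * s) * - (cis (lam * s) * v s) + \<i> * (- lam) * cis (- lam * s) * H s
        = \<i> * (- \<i> * lam * ?p s + \<i> * v s)" for s
    proof -
      have "cis (- lam * s) * - (cis (lam * s) * v s) = - v s"
        by (simp add: mult.assoc[symmetric] cis_mult)
      moreover have "\<i> * (- lam) * cis (- lam * s) * H s = \<i> * (- lam) * (\<i> * ?p s)"
        by (simp only: mult.assoc cis_H)
      ultimately show ?thesis by (simp add: algebra_simps)
    qed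
    then show ?thesis by simp
  qed
  finally show "?p y - ?p x = (LINT t:{x..y}|lebesgue. - \<i> * lam * ?p t + \<i> * v t)"
    by simp
qed

lemma psi_lam_primitive_neg:
  assumes v: "sq_int v" and ex: "psi_lam_exists v lam"
  shows "primitive_on {..<0} (psi_lam v lam) (\<lambda>t. - \<i> * lam * psi_lam v lam t + \<i> * v t)"
proof -
  have "primitive_on {0<..} (psi_lam (\<lambda>t. v (- t)) (- lam))
      (\<lambda>t. - \<i> * of_real (- lam) * psi_lam (\<lambda>t. v (- t)) (- lam) t + \<i> * v (- t))"
    by (rule psi_lam_primitive_pos[OF sq_int_reflect[OF v] psi_lam_exists_reflect[OF ex]])
  from primitive_on_cmult[OF primitive_on_reflect[OF this], of "-1"] show ?thesis
    by (simp add: psi_lam_reflect algebra_simps)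
qed

definition boundary_mean :: "real \<Rightarrow> (real \<Rightarrow> complex) \<Rightarrow> complex" where
  "boundary_mean \<alpha> \<psi> = lim_m0 \<psi> / 2 + exp (- \<i> * of_real \<alpha>) / 2 * lim_p0 \<psi>"

lemma eigenpair_primitive_on:
  assumes v: "sq_int v" and ep: "eigenpair v \<alpha> lam \<psi> d\<psi>"
  defines "g \<equiv> \<lambda>t. - \<i> * lam * \<psi> t + \<i> * boundary_mean \<alpha> \<psi> * v t"
  shows "primitive_on {0<..} \<psi> g" and "primitive_on {..<0} \<psi> g"
proof -
  have \<psi>: "sq_int \<psi>" and d\<psi>: "sq_int d\<psi>"
    and pos: "primitive_on {0<..} \<psi> d\<psi>" and neg: "primitive_on {..<0} \<psi> d\<psi>"
    using ep by (auto simp: eigenpair_def in_dom_def W21_Omega_iff_primitive_on)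
  have [measurable]: "\<psi> \<in> borel_measurable lebesgue" "d\<psi> \<in> borel_measurable lebesgue"
    "v \<in> borel_measurable lebesgue"
    using \<psi> d\<psi> v by (auto simp: sq_int_def)
  have "AE t in lebesgue. d\<psi> t = g t"
    using ep unfolding eigenpair_def
  proof (elim conjE eventually_mono)
    fix t assume "A_op v \<alpha> \<psi> d\<psi> t = of_real lam * \<psi> t"
    then have "\<i> * (\<i> * d\<psi> t + v t * boundary_mean \<alpha> \<psi>) = \<i> * (lam * \<psi> t)"
      by (simp add: A_op_def boundary_mean_def)
    then show "d\<psi> t = g t"
      by (simp add: g_def algebra_simps)
  qed
  moreover have "g \<in> borel_measurable lebesgue"
    unfolding g_def by measurable
  ultimately show "primitive_on {0<..} \<psi> g" "primitive_on {..<0} \<psi> g"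
    using primitive_on_cong_AE[OF pos] primitive_on_cong_AE[OF neg] by auto
qed

lemma eigenpair_tendsto_lim_m0:
  assumes "eigenpair v \<alpha> lam \<psi> d\<psi>"
  shows "(\<psi> \<longlongrightarrow> lim_m0 \<psi>) (at_left 0)"
proof -
  have "sq_int d\<psi>" "primitive_on {..<0} \<psi> d\<psi>"
    using assms by (auto simp: eigenpair_def in_dom_def W21_Omega_iff_primitive_on)
  then obtain L where L: "(\<psi> \<longlongrightarrow> L) (at_left 0)"
    using primitive_on_tendsto_at_left_0 sq_int_set_integrable_Icc by blast
  moreover from L have "Lim (at_left 0) \<psi> = L"
    by (rule tendsto_Lim[OF trivial_limit_at_left_real])
  ultimately show ?thesis
    unfolding lim_m0_def by simp
qed

lemma eigenpair_tendsto_lim_p0: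
  assumes "eigenpair v \<alpha> lam \<psi> d\<psi>"
  shows "(\<psi> \<longlongrightarrow> lim_p0 \<psi>) (at_right 0)"
proof -
  have "sq_int d\<psi>" "primitive_on {0<..} \<psi> d\<psi>"
    using assms by (auto simp: eigenpair_def in_dom_def W21_Omega_iff_primitive_on)
  then have L: "(\<psi> \<longlongrightarrow> \<psi> 1 - (LINT t:{0<..1}|lebesgue. d\<psi> t)) (at_right 0)"
    using primitive_on_tendsto_at_right_0 sq_int_set_integrable_Icc by blast
  moreover from L have "Lim (at_right 0) \<psi> = \<psi> 1 - (LINT t:{0<..1}|lebesgue. d\<psi> t)"
    by (rule tendsto_Lim[OF trivial_limit_at_right_real])
  ultimately show ?thesis
    unfolding lim_p0_def by simp
qed

lemma eigenpair_eq_psi_lam: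
  assumes v: "sq_int v" and ep: "eigenpair v \<alpha> lam \<psi> d\<psi>" and x: "x \<noteq> 0"
  shows "\<psi> x = boundary_mean \<alpha> \<psi> * psi_lam v lam x"
proof -
  let ?c = "boundary_mean \<alpha> \<psi>"
  have \<psi>: "sq_int \<psi>"
    using ep by (simp add: eigenpair_def in_dom_def W21_Omega_def)
  note prim = eigenpair_primitive_on[OF v ep]
  show ?thesis
  proof (cases "x > 0")
    case True
    from primitive_ode_tendsto_at_top[OF \<psi> v prim(1) True]
    have "\<i> * ?c * Lim at_top (\<lambda>R. LINT y:{x..R}|lebesgue. kern v lam x y) = - \<psi> x"
      by (rule mult_Lim_eq) simp
    with True show ?thesis by (simp add: psi_lam_def algebra_simps)
  next
    case False
    with x have "x < 0" by simp
    from primitive_ode_tendsto_at_bot[OF \<psi> v prim(2) this]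
    have "\<i> * ?c * Lim at_bot (\<lambda>R. LINT y:{R..x}|lebesgue. kern v lam x y) = \<psi> x"
      by (rule mult_Lim_eq) simp
    with \<open>x < 0\<close> show ?thesis by (simp add: psi_lam_def algebra_simps)
  qed
qed

lemma eigenpair_psi_lam_exists:
  assumes v: "sq_int v" and ep: "eigenpair v \<alpha> lam \<psi> d\<psi>" and c: "boundary_mean \<alpha> \<psi> \<noteq> 0"
  shows "psi_lam_exists v lam"
proof -
  let ?c = "boundary_mean \<alpha> \<psi>"
  have \<psi>: "sq_int \<psi>"
    using ep by (simp add: eigenpair_def in_dom_def W21_Omega_def)
  note prim = eigenpair_primitive_on[OF v ep]
  have ic: "\<i> * ?c \<noteq> 0" using c by simp
  have conv: "\<exists>l. (f \<longlongrightarrow> l) F" if "((\<lambda>R. \<i> * ?c * f R) \<longlongrightarrow> L) F" for f :: "real \<Rightarrow> complex" and L F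
    using that tendsto_mult_left_iff[OF ic, of f "L / (\<i> * ?c)" F] ic by auto
  show ?thesis
    unfolding psi_lam_exists_def
    by (auto intro: conv primitive_ode_tendsto_at_top[OF \<psi> v prim(1)] primitive_ode_tendsto_at_bot[OF \<psi> v prim(2)])
qed

lemma eigenpair_AE_eq_psi_lam:
  assumes "sq_int v" and "eigenpair v \<alpha> lam \<psi> d\<psi>"
  shows "AE x in lebesgue. \<psi> x = boundary_mean \<alpha> \<psi> * psi_lam v lam x"
  using AE_lebesgue_nonzero by (rule eventually_mono) (rule eigenpair_eq_psi_lam[OF assms])

lemma eigenpair_boundary_mean_nonzero:
  assumes "sq_int v" and "eigenpair v \<alpha> lam \<psi> d\<psi>" and "\<not> (AE x in lebesgue. \<psi> x = 0)"
  shows "boundary_mean \<alpha> \<psi> \<noteq> 0"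
  using eigenpair_AE_eq_psi_lam[OF assms(1,2)] assms(3) by (auto elim: eventually_mono)

lemma eigenpair_sq_int_psi_lam:
  assumes v: "sq_int v" and ep: "eigenpair v \<alpha> lam \<psi> d\<psi>" and c: "boundary_mean \<alpha> \<psi> \<noteq> 0"
  shows "sq_int (psi_lam v lam)"
proof -
  let ?c = "boundary_mean \<alpha> \<psi>"
  have \<psi>: "sq_int \<psi>"
    using ep by (simp add: eigenpair_def in_dom_def W21_Omega_def)
  have p_eq: "psi_lam v lam x = \<psi> x / ?c" if "x \<noteq> 0" for x
    using eigenpair_eq_psi_lam[OF v ep that] c by simp
  have [measurable]: "\<psi> \<in> borel_measurable lebesgue"
    using \<psi> by (simp add: sq_int_def)
  have "(\<lambda>x. if x \<in> {0} then 0 else \<psi> x / ?c) \<in> borel_measurable lebesgue"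
    by (rule measurable_If_set) auto
  moreover have "psi_lam v lam = (\<lambda>x. if x \<in> {0} then 0 else \<psi> x / ?c)"
    using p_eq by (auto simp: fun_eq_iff psi_lam_def)
  ultimately have "psi_lam v lam \<in> borel_measurable lebesgue"
    by simp
  with sq_int_linear_combination[OF \<psi> \<psi>, of "1 / ?c" 0] show ?thesis
    by (rule sq_int_cong_AE) (auto intro: eventually_mono[OF AE_lebesgue_nonzero] simp: p_eq)
qed

lemma eigenpair_imp_psi_cond:
  assumes v: "sq_int v" and ep: "eigenpair v \<alpha> lam \<psi> d\<psi>" and nz: "\<not> (AE x in lebesgue. \<psi> x = 0)"
  shows "psi_cond v \<alpha> lam"
proof -
  let ?p = "psi_lam v lam"
  let ?e = "exp (- \<i> * of_real \<alpha>)"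
  let ?c = "boundary_mean \<alpha> \<psi>"
  have c: "?c \<noteq> 0"
    by (rule eigenpair_boundary_mean_nonzero[OF v ep nz])
  have p: "sq_int ?p"
    by (rule eigenpair_sq_int_psi_lam[OF v ep c])
  have trace: "\<i> * lim_m0 \<psi> - \<i> * ?e * lim_p0 \<psi> = l2_inner \<psi> v"
    using ep by (simp add: eigenpair_def in_dom_def)
  have m0: "lim_m0 \<psi> = ?c * lim_m0 ?p"
    using eigenpair_tendsto_lim_m0[OF ep] unfolding lim_m0_def
    by (rule Lim_at_0_within_cmult[OF _ trivial_limit_at_left_real eigenpair_eq_psi_lam[OF v ep] c])
  have p0: "lim_p0 \<psi> = ?c * lim_p0 ?p"
    using eigenpair_tendsto_lim_p0[OF ep] unfolding lim_p0_def
    by (rule Lim_at_0_within_cmult[OF _ trivial_limit_at_right_real eigenpair_eq_psi_lam[OF v ep] c])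
  have inner: "l2_inner \<psi> v = ?c * l2_inner ?p v"
    using eigenpair_AE_eq_psi_lam[OF v ep] ep p v
    by (intro l2_inner_cmult_AE) (auto simp: eigenpair_def in_dom_def W21_Omega_def sq_int_def)
  have "2 * ?c = lim_m0 \<psi> + ?e * lim_p0 \<psi>"
    unfolding boundary_mean_def by (simp add: field_simps)
  then have "?c * (lim_m0 ?p + ?e * lim_p0 ?p) = ?c * 2"
    using m0 p0 by (simp add: algebra_simps)
  moreover have "?c * (lim_m0 ?p - ?e * lim_p0 ?p) = ?c * (- \<i> * l2_inner ?p v)"
    using arg_cong[OF trace, of "\<lambda>z. - \<i> * z"] m0 p0 inner by (simp add: algebra_simps)
  moreover have "psi_lam_exists v lam"
    by (rule eigenpair_psi_lam_exists[OF v ep c])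
  ultimately show ?thesis
    using p unfolding psi_cond_def mult_left_cancel[OF c] by simp
qed

lemma psi_cond_imp_eigenpair:
  assumes v: "sq_int v" and pc: "psi_cond v \<alpha> lam"
  shows "eigenpair v \<alpha> lam (psi_lam v lam) (\<lambda>x. - \<i> * lam * psi_lam v lam x + \<i> * v x)"
proof -
  let ?p = "psi_lam v lam"
  let ?e = "exp (- \<i> * of_real \<alpha>)"
  have ex: "psi_lam_exists v lam" and p: "sq_int ?p"
    and sum: "lim_m0 ?p + ?e * lim_p0 ?p = 2"
    and diff: "lim_m0 ?p - ?e * lim_p0 ?p = - \<i> * l2_inner ?p v"
    using pc unfolding psi_cond_def by auto
  have "W21_Omega ?p (\<lambda>x. - \<i> * lam * ?p x + \<i> * v x)"
    unfolding W21_Omega_iff_primitive_on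
    using p sq_int_linear_combination[OF p v, of "- \<i> * lam" \<i>]
      psi_lam_primitive_pos[OF v ex] psi_lam_primitive_neg[OF v ex]
    by blast
  moreover have "\<i> * lim_m0 ?p - \<i> * ?e * lim_p0 ?p = l2_inner ?p v"
    using arg_cong[OF diff, of "\<lambda>z. \<i> * z"] by (simp add: algebra_simps)
  moreover have "boundary_mean \<alpha> ?p = 1"
    using sum by (simp add: boundary_mean_def field_simps)
  ultimately show ?thesis
    unfolding eigenpair_def in_dom_def A_op_def boundary_mean_def[symmetric] by (simp add: algebra_simps)
qed

lemma psi_cond_imp_psi_lam_nontrivial:
  assumes v: "sq_int v" and pc: "psi_cond v \<alpha> lam"
  shows "\<not> (AE x in lebesgue. psi_lam v lam x = 0)"
proof
  note ep = psi_cond_imp_eigenpair[OF v pc]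
  assume "AE x in lebesgue. psi_lam v lam x = 0"
  then have "lim_m0 (psi_lam v lam) = 0" "lim_p0 (psi_lam v lam) = 0"
    using tendsto_at_left_AE_zero[OF eigenpair_tendsto_lim_m0[OF ep]]
      tendsto_at_right_AE_zero[OF eigenpair_tendsto_lim_p0[OF ep]] by auto
  with pc show False
    unfolding psi_cond_def by simp
qed

lemma eigenpair_unique:
  assumes v: "sq_int v" and ep1: "eigenpair v \<alpha> lam \<psi>1 d\<psi>1" and nz: "\<not> (AE x in lebesgue. \<psi>1 x = 0)"
    and ep2: "eigenpair v \<alpha> lam \<psi>2 d\<psi>2"
  shows "AE x in lebesgue. \<psi>2 x = boundary_mean \<alpha> \<psi>2 / boundary_mean \<alpha> \<psi>1 * \<psi>1 x"
proof -
  have "boundary_mean \<alpha> \<psi>1 \<noteq> 0"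
    by (rule eigenpair_boundary_mean_nonzero[OF v ep1 nz])
  moreover note eigenpair_AE_eq_psi_lam[OF v ep1] eigenpair_AE_eq_psi_lam[OF v ep2]
  ultimately show ?thesis
    by (auto elim: eventually_elim2)
qed

theorem theorem4p1:
  fixes v :: "real \<Rightarrow> complex" and \<alpha> lam :: real
  assumes "sq_int v"
  shows "(is_eigenvalue v \<alpha> lam \<longleftrightarrow> psi_cond v \<alpha> lam)
    \<and> (psi_cond v \<alpha> lam \<longrightarrow> (\<exists>dpsi. eigenpair v \<alpha> lam (psi_lam v lam) dpsi))
    \<and> (is_eigenvalue v \<alpha> lam \<longrightarrow>
           (\<forall>psi1 dpsi1 psi2 dpsi2.
              eigenpair v \<alpha> lam psi1 dpsi1 \<and> \<not> (AE x in lebesgue. psi1 x = 0) \<and>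
              eigenpair v \<alpha> lam psi2 dpsi2 \<longrightarrow>
              (\<exists>c. AE x in lebesgue. psi2 x = c * psi1 x)))"
  using eigenpair_imp_psi_cond[OF assms] psi_cond_imp_eigenpair[OF assms]
    psi_cond_imp_psi_lam_nontrivial[OF assms] eigenpair_unique[OF assms]
  unfolding is_eigenvalue_def by blast

end
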